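(* For every $n\ge1$ (of either parity), the permutation representation of $S_n$ over $\mathbb{C}$ arising from the action of $S_n$ (by $\pi\cdot S=\pi(S)$) on the set of odd-sized subsets of $\{1,\dots,n\}$ does not unite conjugacy classes.
   Context: A representation $T$ of $G$ unites conjugacy classes if there are non-conjugate $\sigma,\tau\in G$ with $T(\sigma),T(\tau)$ similar matrices. *)

theory Defs
  imports "Jordan_Normal_Form.Matrix" "HOL-Combinatorics.Permutations"
begin

definition odd_subsets :: "nat \<Rightarrow> nat set set" where
  "odd_subsets n = {S. S \<subseteq> {1..n} \<and> odd (card S)}"

text \<open>A fixed enumeration of the odd-sized subsets (the choice does not affect
  the similarity class of the representation matrices).\<close>
definition odd_subsets_enum :: "nat \<Rightarrow> nat set list" where
  "odd_subsets_enum n = (SOME xs. distinct xs \<and> set xs = odd_subsets n)"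

definition odd_perm_rep :: "nat \<Rightarrow> (nat \<Rightarrow> nat) \<Rightarrow> complex mat" where
  "odd_perm_rep n \<sigma> =
     (let xs = odd_subsets_enum n; N = length xs
      in mat N N (\<lambda>(i, j). if \<sigma> ` (xs ! j) = xs ! i then 1 else 0))"

end

theory Submission
  imports Defs "HOL-Combinatorics.Cycles" "HOL-Combinatorics.Orbits" "HOL-Number_Theory.Totient"
begin

text \<open>
  The trace of T(\<sigma>)^k = T(\<sigma>^k) counts the odd-sized \<sigma>^k-invariant subsets. An invariant
  set is a union of cycles, so this count is 0 if all cycles of \<sigma>^k have even length and
  2^(c - 1) otherwise, where c is the number of cycles of \<sigma>^k. The largest power 2^a dividing
  all cycle lengths of \<sigma> is read off from the traces as the least i for which \<sigma>^(2^i) has an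
  odd cycle, and every \<sigma>^(2^a k) has one. So similar representations give, for every k, the
  same number of cycles of \<sigma>^(2^a k), namely the sum over x of gcd(l x, 2^a k) / l x, where
  l x is the length of the cycle through x. Inverting these sums by means of
  \<Sum>{\<phi> d | d dvd k} = k recovers the cycle type, and permutations of equal cycle type are
  conjugate.
\<close>

section \<open>Orbits and cycle lengths\<close>

lemma orbit_eq_range_funpow:
  assumes "permutation \<sigma>"
  shows "orbit \<sigma> x = range (\<lambda>i. (\<sigma> ^^ i) x)"
  using orbit_altdef_permutation[OF assms] by auto

lemma card_orbit_eq_least_power:
  assumes "permutation \<sigma>"
  shows "card (orbit \<sigma> x) = least_power \<sigma> x"
proof -
  have "orbit \<sigma> x = set (support \<sigma> x)"
    using support_set[OF assms] orbit_eq_range_funpow[OF assms] by simp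
  then show ?thesis
    using distinct_card[OF cycle_of_permutation[OF assms]] by simp
qed

lemma orbit_eq_if_mem_orbit:
  assumes "permutation \<sigma>" "y \<in> orbit \<sigma> x"
  shows "orbit \<sigma> y = orbit \<sigma> x"
  using orbit_cyclic_eq3[OF cyclic_on_orbit'[OF assms(1)] assms(2)] .

lemma least_power_eq_if_mem_orbit:
  assumes "permutation \<sigma>" "y \<in> orbit \<sigma> x"
  shows "least_power \<sigma> y = least_power \<sigma> x"
  by (metis assms card_orbit_eq_least_power orbit_eq_if_mem_orbit)

lemma orbits_disjoint:
  assumes "permutation \<sigma>" "orbit \<sigma> x \<noteq> orbit \<sigma> y"
  shows "orbit \<sigma> x \<inter> orbit \<sigma> y = {}"
proof (rule ccontr)
  assume "orbit \<sigma> x \<inter> orbit \<sigma> y \<noteq> {}"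
  then obtain z where "z \<in> orbit \<sigma> x" "z \<in> orbit \<sigma> y" by blast
  then show False
    using orbit_eq_if_mem_orbit[OF assms(1), of z x] orbit_eq_if_mem_orbit[OF assms(1), of z y] assms(2)
    by simp
qed

lemma image_orbit:
  assumes "permutation \<sigma>"
  shows "\<sigma> ` orbit \<sigma> x = orbit \<sigma> x"
proof
  show "\<sigma> ` orbit \<sigma> x \<subseteq> orbit \<sigma> x" by (auto intro: orbit.step)
  show "orbit \<sigma> x \<subseteq> \<sigma> ` orbit \<sigma> x"
  proof
    fix z assume "z \<in> orbit \<sigma> x"
    then have "Hilbert_Choice.inv \<sigma> z \<in> orbit \<sigma> x"
      using orbit_inv_eq[OF assms] by (metis orbit.step)
    moreover have "z = \<sigma> (Hilbert_Choice.inv \<sigma> z)"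
      using assms by (metis bij_is_surj permutation_bijective surj_f_inv_f)
    ultimately show "z \<in> \<sigma> ` orbit \<sigma> x" by blast
  qed
qed

lemma orbit_subset_if_image_subset:
  assumes "\<sigma> ` S \<subseteq> S" "x \<in> S"
  shows "orbit \<sigma> x \<subseteq> S"
proof
  fix y assume "y \<in> orbit \<sigma> x"
  then show "y \<in> S" by induction (use assms in auto)
qed

lemma funpow_eq_iff_mod_least_power:
  assumes "permutation \<sigma>"
  shows "(\<sigma> ^^ i) x = (\<sigma> ^^ j) x \<longleftrightarrow> i mod least_power \<sigma> x = j mod least_power \<sigma> x"
proof -
  have "(\<sigma> ^^ i) x = (\<sigma> ^^ j) x \<longleftrightarrow> i mod least_power \<sigma> x = j mod least_power \<sigma> x"
    if "i \<le> j" for i j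
  proof -
    have "(\<sigma> ^^ j) x = (\<sigma> ^^ i) ((\<sigma> ^^ (j - i)) x)"
      using that by (metis funpow_add le_add_diff_inverse o_apply)
    then have "(\<sigma> ^^ i) x = (\<sigma> ^^ j) x \<longleftrightarrow> (\<sigma> ^^ (j - i)) x = x"
      using assms by (metis bij_is_inj injD permutation_bijective permutation_funpow)
    also have "\<dots> \<longleftrightarrow> least_power \<sigma> x dvd j - i"
      using least_power_dvd[OF assms] by simp
    also have "\<dots> \<longleftrightarrow> i mod least_power \<sigma> x = j mod least_power \<sigma> x"
      using mod_eq_dvd_iff_nat[OF that] by (simp add: eq_commute)
    finally show ?thesis .
  qed
  then show ?thesis by (metis nat_le_linear)
qed

lemma dvd_mult_iff_div_gcd_dvd:
  fixes p k m :: nat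
  assumes "p > 0"
  shows "p dvd k * m \<longleftrightarrow> p div gcd p k dvd m"
proof -
  obtain d e where d: "p = gcd p k * d" and e: "k = gcd p k * e"
    by (metis dvd_def gcd_dvd1 gcd_dvd2)
  have "gcd p k > 0" using assms by simp
  moreover have "coprime d e"
    using d e assms by (metis div_gcd_coprime gcd_eq_0_iff nonzero_mult_div_cancel_left not_gr0)
  ultimately have "p dvd k * m \<longleftrightarrow> d dvd m"
    using d e by (metis coprime_dvd_mult_right_iff mult.assoc nat_mult_dvd_cancel_disj not_gr0)
  moreover have "d = p div gcd p k"
    using d \<open>gcd p k > 0\<close> by (metis less_not_refl nonzero_mult_div_cancel_left)
  ultimately show ?thesis by simp
qed

lemma least_power_funpow:
  assumes "permutation \<sigma>"
  shows "least_power (\<sigma> ^^ k) x = least_power \<sigma> x div gcd (least_power \<sigma> x) k"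
proof -
  let ?l = "least_power \<sigma> x"
  have "least_power (\<sigma> ^^ k) x dvd m \<longleftrightarrow> ?l div gcd ?l k dvd m" for m
  proof -
    have "least_power (\<sigma> ^^ k) x dvd m \<longleftrightarrow> (\<sigma> ^^ (k * m)) x = x"
      using least_power_dvd[OF permutation_funpow[OF assms]] by (simp add: funpow_mult)
    also have "\<dots> \<longleftrightarrow> ?l dvd k * m" using least_power_dvd[OF assms] by simp
    finally show ?thesis
      using dvd_mult_iff_div_gcd_dvd least_power_of_permutation(2)[OF assms] by simp
  qed
  then show ?thesis by (meson dvd_antisym dvd_refl)
qed

section \<open>Invariant subsets\<close>

definition orbits :: "('a \<Rightarrow> 'a) \<Rightarrow> 'a set \<Rightarrow> 'a set set" where
  "orbits \<sigma> A = orbit \<sigma> ` A"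

definition invariant_subsets :: "('a \<Rightarrow> 'a) \<Rightarrow> 'a set \<Rightarrow> 'a set set" where
  "invariant_subsets \<sigma> A = {S. S \<subseteq> A \<and> \<sigma> ` S = S}"

definition odd_invariant_subsets :: "('a \<Rightarrow> 'a) \<Rightarrow> 'a set \<Rightarrow> 'a set set" where
  "odd_invariant_subsets \<sigma> A = {S \<in> invariant_subsets \<sigma> A. odd (card S)}"

lemma invariant_subsets_eq_Unions_of_orbits:
  assumes "\<sigma> permutes A" "finite A"
  shows "invariant_subsets \<sigma> A = Union ` Pow (orbits \<sigma> A)"
proof
  have p: "permutation \<sigma>" using assms permutation_permutes by blast
  show "invariant_subsets \<sigma> A \<subseteq> Union ` Pow (orbits \<sigma> A)"
  proof
    fix S assume "S \<in> invariant_subsets \<sigma> A"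
    then have S: "S \<subseteq> A" "\<sigma> ` S = S" unfolding invariant_subsets_def by auto
    have "orbit \<sigma> x \<subseteq> S" if "x \<in> S" for x
      using orbit_subset_if_image_subset[of \<sigma> S x] S(2) that by simp
    then have "S = \<Union> (orbit \<sigma> ` S)" using permutation_self_in_orbit[OF p] by auto
    moreover have "orbit \<sigma> ` S \<subseteq> orbits \<sigma> A" using S(1) unfolding orbits_def by auto
    ultimately show "S \<in> Union ` Pow (orbits \<sigma> A)" by blast
  qed
  show "Union ` Pow (orbits \<sigma> A) \<subseteq> invariant_subsets \<sigma> A"
  proof
    fix S assume "S \<in> Union ` Pow (orbits \<sigma> A)"
    then obtain B where B: "B \<subseteq> orbits \<sigma> A" "S = \<Union>B" by auto
    then have "S \<subseteq> A" using permutes_orbit_subset[OF assms(1)] unfolding orbits_def by auto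
    moreover have "\<forall>b\<in>B. \<sigma> ` b = b" using B(1) image_orbit[OF p] unfolding orbits_def by auto
    then have "\<sigma> ` S = S" by (simp add: B(2) image_Union)
    ultimately show "S \<in> invariant_subsets \<sigma> A" unfolding invariant_subsets_def by blast
  qed
qed

lemma inj_on_Union_orbits:
  assumes "permutation \<sigma>"
  shows "inj_on Union (Pow (orbits \<sigma> A))"
proof -
  have mem: "b \<in> B'"
    if B: "B \<subseteq> orbits \<sigma> A" "B' \<subseteq> orbits \<sigma> A" "\<Union>B = \<Union>B'" "b \<in> B" for B B' b
  proof -
    obtain x where x: "b = orbit \<sigma> x" using B(1,4) unfolding orbits_def by auto
    then have "x \<in> \<Union>B" using B(4) permutation_self_in_orbit[OF assms] by blast
    then have "x \<in> \<Union>B'" using B(3) by simp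
    then obtain b' where b': "b' \<in> B'" "x \<in> b'" by auto
    then obtain y where "b' = orbit \<sigma> y" using B(2) unfolding orbits_def by auto
    then have "b' = b" using x orbit_eq_if_mem_orbit[OF assms, of x y] b'(2) by simp
    then show ?thesis using b'(1) by simp
  qed
  show ?thesis
  proof (rule inj_onI)
    fix B B' assume hyps: "B \<in> Pow (orbits \<sigma> A)" "B' \<in> Pow (orbits \<sigma> A)" "\<Union>B = \<Union>B'"
    show "B = B'"
    proof (rule subset_antisym; rule subsetI)
      fix b assume "b \<in> B" then show "b \<in> B'" using mem[of B B' b] hyps by simp
    next
      fix b assume "b \<in> B'" then show "b \<in> B" using mem[of B' B b] hyps by simp
    qed
  qed
qed

lemma card_invariant_subsets:
  assumes "\<sigma> permutes A" "finite A"
  shows "card (invariant_subsets \<sigma> A) = 2 ^ card (orbits \<sigma> A)"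
proof -
  have "inj_on Union (Pow (orbits \<sigma> A))"
    using inj_on_Union_orbits assms permutation_permutes by blast
  then have "card (Union ` Pow (orbits \<sigma> A)) = card (Pow (orbits \<sigma> A))"
    by (rule card_image)
  moreover have "finite (orbits \<sigma> A)" using assms(2) unfolding orbits_def by simp
  ultimately show ?thesis
    by (simp add: invariant_subsets_eq_Unions_of_orbits[OF assms] card_Pow)
qed

lemma card_orbits_eq_sum_inverse_least_power:
  assumes "\<sigma> permutes A" "finite A"
  shows "real (card (orbits \<sigma> A)) = (\<Sum>x\<in>A. 1 / real (least_power \<sigma> x))"
proof -
  have p: "permutation \<sigma>" using assms permutation_permutes by blast
  have "(\<Sum>x\<in>{x\<in>A. orbit \<sigma> x = C}. 1 / real (least_power \<sigma> x)) = 1"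
    if C: "C \<in> orbits \<sigma> A" for C
  proof -
    obtain z where z: "z \<in> A" "C = orbit \<sigma> z" using C unfolding orbits_def by auto
    have "{x\<in>A. orbit \<sigma> x = C} = C"
    proof
      show "{x\<in>A. orbit \<sigma> x = C} \<subseteq> C" using permutation_self_in_orbit[OF p] by blast
      show "C \<subseteq> {x\<in>A. orbit \<sigma> x = C}"
        using permutes_orbit_subset[OF assms(1) z(1)] orbit_eq_if_mem_orbit[OF p] z(2) by blast
    qed
    moreover have "least_power \<sigma> x = card C" if "x \<in> C" for x
      using least_power_eq_if_mem_orbit[OF p, of x z] card_orbit_eq_least_power[OF p, of z] z(2) that
      by simp
    moreover have "card C > 0"
      using z card_orbit_eq_least_power[OF p] least_power_of_permutation(2)[OF p] by simp
    ultimately show ?thesis by simp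
  qed
  then have "(\<Sum>C\<in>orbits \<sigma> A. \<Sum>x\<in>{x\<in>A. orbit \<sigma> x = C}. 1 / real (least_power \<sigma> x))
      = (\<Sum>C\<in>orbits \<sigma> A. 1)"
    by (rule sum.cong[OF refl])
  moreover have "(\<Sum>x\<in>A. 1 / real (least_power \<sigma> x))
      = (\<Sum>C\<in>orbits \<sigma> A. \<Sum>x\<in>{x\<in>A. orbit \<sigma> x = C}. 1 / real (least_power \<sigma> x))"
    unfolding orbits_def by (rule sum.image_gen[OF assms(2)])
  ultimately show ?thesis by simp
qed

lemma odd_invariant_subsets_empty_if_even_cycles:
  assumes "\<sigma> permutes A" "finite A" "\<forall>x\<in>A. even (least_power \<sigma> x)"
  shows "odd_invariant_subsets \<sigma> A = {}"
proof -
  have p: "permutation \<sigma>" using assms permutation_permutes by blast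
  have "even (card S)" if S: "S \<in> invariant_subsets \<sigma> A" for S
  proof -
    obtain B where B: "B \<subseteq> orbits \<sigma> A" "S = \<Union>B"
      using S invariant_subsets_eq_Unions_of_orbits[OF assms(1,2)] by auto
    have "\<forall>b\<in>B. finite b"
      using B(1) finite_orbit[OF permutation_self_in_orbit[OF p]] unfolding orbits_def by auto
    moreover have "pairwise disjnt B"
    proof (rule pairwiseI)
      fix b b' assume "b \<in> B" "b' \<in> B" "b \<noteq> b'"
      then show "disjnt b b'"
        using B(1) orbits_disjoint[OF p] unfolding orbits_def disjnt_def by blast
    qed
    ultimately have "card S = (\<Sum>b\<in>B. card b)" unfolding B(2) by (simp add: card_Union_disjoint)
    moreover have "\<forall>b\<in>B. even (card b)"
      using B(1) assms(3) card_orbit_eq_least_power[OF p] unfolding orbits_def by auto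
    ultimately show ?thesis by (simp add: dvd_sum)
  qed
  then show ?thesis unfolding odd_invariant_subsets_def by auto
qed

lemma even_card_sym_diff_iff:
  assumes "finite S" "finite T"
  shows "even (card ((S - T) \<union> (T - S))) \<longleftrightarrow> even (card S + card T)"
proof -
  have "card ((S - T) \<union> (T - S)) = card (S - T) + card (T - S)"
    by (rule card_Un_disjoint) (use assms in auto)
  moreover have "card S = card (S \<inter> T) + card (S - T)" "card T = card (S \<inter> T) + card (T - S)"
    using card_Int_Diff[OF assms(1), of T] card_Int_Diff[OF assms(2), of S] by (simp_all add: Int_commute)
  ultimately show ?thesis by presburger
qed

text \<open>Symmetric difference with an odd cycle is an involution of the invariant subsets that
  exchanges odd and even cardinality.\<close>

lemma card_odd_invariant_subsets_if_odd_cycle: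
  assumes "\<sigma> permutes A" "finite A" "x \<in> A" "odd (least_power \<sigma> x)"
  shows "2 * card (odd_invariant_subsets \<sigma> A) = 2 ^ card (orbits \<sigma> A)"
proof -
  have p: "permutation \<sigma>" using assms permutation_permutes by blast
  define C where "C = orbit \<sigma> x"
  have C: "C \<subseteq> A" "\<sigma> ` C = C" "odd (card C)"
    using permutes_orbit_subset[OF assms(1,3)] image_orbit[OF p] card_orbit_eq_least_power[OF p] assms(4)
    unfolding C_def by auto
  define flip where "flip S = (S - C) \<union> (C - S)" for S
  let ?I = "invariant_subsets \<sigma> A"
  let ?Ev = "{S \<in> ?I. even (card S)}"
  have flip_flip: "flip (flip S) = S" for S unfolding flip_def by auto
  have flip_invariant: "flip S \<in> ?I" if "S \<in> ?I" for S
  proof -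
    have "\<sigma> ` flip S = (\<sigma> ` S - \<sigma> ` C) \<union> (\<sigma> ` C - \<sigma> ` S)"
      using permutes_inj[OF assms(1)] unfolding flip_def by (simp add: image_Un image_set_diff)
    then show ?thesis using that C(1,2) unfolding invariant_subsets_def flip_def by auto
  qed
  have flip_parity: "odd (card (flip S)) \<longleftrightarrow> even (card S)" if "S \<in> ?I" for S
  proof -
    have "finite S" using that assms(2) finite_subset unfolding invariant_subsets_def by blast
    then show ?thesis
      using even_card_sym_diff_iff[of S C] C(1,3) assms(2) finite_subset unfolding flip_def by auto
  qed
  have "bij_betw flip (odd_invariant_subsets \<sigma> A) ?Ev"
    by (rule bij_betw_byWitness[where f' = flip])
      (use flip_flip flip_invariant flip_parity in \<open>auto simp: odd_invariant_subsets_def\<close>)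
  then have "card (odd_invariant_subsets \<sigma> A) = card ?Ev" by (rule bij_betw_same_card)
  moreover have "card ?I = card (odd_invariant_subsets \<sigma> A) + card ?Ev"
  proof -
    have "finite ?I" using assms(2) unfolding invariant_subsets_def by simp
    have "?I = odd_invariant_subsets \<sigma> A \<union> ?Ev" unfolding odd_invariant_subsets_def by auto
    also have "card \<dots> = card (odd_invariant_subsets \<sigma> A) + card ?Ev"
      by (rule card_Un_disjoint) (use \<open>finite ?I\<close> in \<open>auto simp: odd_invariant_subsets_def\<close>)
    finally show ?thesis .
  qed
  ultimately show ?thesis using card_invariant_subsets[OF assms(1,2)] by simp
qed

lemma odd_invariant_subsets_nonempty_iff:
  assumes "\<sigma> permutes A" "finite A"
  shows "odd_invariant_subsets \<sigma> A \<noteq> {} \<longleftrightarrow> (\<exists>x\<in>A. odd (least_power \<sigma> x))"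
proof
  assume "odd_invariant_subsets \<sigma> A \<noteq> {}"
  then show "\<exists>x\<in>A. odd (least_power \<sigma> x)"
    using odd_invariant_subsets_empty_if_even_cycles[OF assms] by blast
next
  assume "\<exists>x\<in>A. odd (least_power \<sigma> x)"
  then have "2 * card (odd_invariant_subsets \<sigma> A) \<noteq> 0"
    using card_odd_invariant_subsets_if_odd_cycle[OF assms] by (metis power_not_zero zero_neq_numeral)
  then show "odd_invariant_subsets \<sigma> A \<noteq> {}" by auto
qed

section \<open>Recovering a multiset of positive integers from gcd sums\<close>

definition gcd_ratio_sum :: "('a \<Rightarrow> nat) \<Rightarrow> 'a set \<Rightarrow> nat \<Rightarrow> real" where
  "gcd_ratio_sum p A k = (\<Sum>x\<in>A. real (gcd (p x) k) / real (p x))"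

definition dvd_reciprocal_sum :: "('a \<Rightarrow> nat) \<Rightarrow> 'a set \<Rightarrow> nat \<Rightarrow> real" where
  "dvd_reciprocal_sum p A d = (\<Sum>x\<in>A. if d dvd p x then 1 / real (p x) else 0)"

lemma card_orbits_funpow_eq_gcd_ratio_sum:
  assumes "\<sigma> permutes A" "finite A"
  shows "real (card (orbits (\<sigma> ^^ k) A)) = gcd_ratio_sum (least_power \<sigma>) A k"
proof -
  have p: "permutation \<sigma>" using assms permutation_permutes by blast
  have "1 / real (least_power (\<sigma> ^^ k) x) = real (gcd (least_power \<sigma> x) k) / real (least_power \<sigma> x)"
    for x
  proof -
    have "least_power \<sigma> x > 0" by (rule least_power_of_permutation(2)[OF p])
    then show ?thesis by (simp add: least_power_funpow[OF p] real_of_nat_div)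
  qed
  then show ?thesis
    unfolding gcd_ratio_sum_def card_orbits_eq_sum_inverse_least_power[OF permutes_funpow[OF assms(1)] assms(2)]
    by simp
qed

lemma gcd_ratio_sum_mult:
  assumes "\<forall>x\<in>A. c dvd p x"
  shows "gcd_ratio_sum p A (c * k) = gcd_ratio_sum (\<lambda>x. p x div c) A k"
  unfolding gcd_ratio_sum_def
proof (rule sum.cong[OF refl])
  fix x assume "x \<in> A"
  then obtain w where "p x = c * w" using assms by blast
  then show "real (gcd (p x) (c * k)) / real (p x) = real (gcd (p x div c) k) / real (p x div c)"
    by (cases "c = 0") (simp_all add: gcd_mult_distrib_nat[symmetric])
qed

lemma real_gcd_eq_sum_totient:
  fixes a k :: nat
  assumes "k > 0"
  shows "real (gcd a k) = (\<Sum>d | d dvd k. if d dvd a then real (totient d) else 0)"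
proof -
  have "gcd a k = (\<Sum>d | d dvd gcd a k. totient d)" by (rule totient_divisor_sum[symmetric])
  also have "\<dots> = (\<Sum>d | d dvd k. if d dvd a then totient d else 0)"
    using assms by (simp add: sum.inter_filter[symmetric] conj_commute)
  finally have "gcd a k = (\<Sum>d | d dvd k. if d dvd a then totient d else 0)" .
  then show ?thesis by (simp add: of_nat_sum) (intro sum.cong refl, simp)
qed

lemma gcd_ratio_sum_eq_sum_totient:
  assumes "k > 0"
  shows "gcd_ratio_sum p A k = (\<Sum>d | d dvd k. real (totient d) * dvd_reciprocal_sum p A d)"
proof -
  have "gcd_ratio_sum p A k
      = (\<Sum>x\<in>A. \<Sum>d | d dvd k. if d dvd p x then real (totient d) / real (p x) else 0)"
    unfolding gcd_ratio_sum_def real_gcd_eq_sum_totient[OF assms] sum_divide_distrib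
    by (intro sum.cong refl) simp
  also have "\<dots> = (\<Sum>d | d dvd k. real (totient d) * dvd_reciprocal_sum p A d)"
    unfolding dvd_reciprocal_sum_def sum_distrib_left
    by (subst sum.swap) (intro sum.cong refl, simp add: divide_inverse)
  finally show ?thesis .
qed

text \<open>Since gcd m k is the sum of \<phi> d over the common divisors d of m and k, the gcd ratio
  sums are a triangular transform of the reciprocal sums, with diagonal entries \<phi> k > 0.\<close>

lemma dvd_reciprocal_sums_eq_if_gcd_ratio_sums_eq:
  assumes "\<forall>k>0. gcd_ratio_sum p A k = gcd_ratio_sum q B k" "d > 0"
  shows "dvd_reciprocal_sum p A d = dvd_reciprocal_sum q B d"
  using assms(2)
proof (induction d rule: less_induct)
  case (less k)
  let ?D = "{d. d dvd k} - {k}"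
  have "finite {d. d dvd k}" using less.prems by simp
  then have split: "(\<Sum>d | d dvd k. f d) = f k + (\<Sum>d\<in>?D. f d)" for f :: "nat \<Rightarrow> real"
    by (subst sum.remove[of _ k]) auto
  have "(\<Sum>d\<in>?D. real (totient d) * dvd_reciprocal_sum p A d)
      = (\<Sum>d\<in>?D. real (totient d) * dvd_reciprocal_sum q B d)"
  proof (rule sum.cong[OF refl])
    fix d assume "d \<in> ?D"
    then have "d < k" "d > 0" using less.prems by (auto dest: dvd_imp_le intro: dvd_pos_nat)
    then show "real (totient d) * dvd_reciprocal_sum p A d = real (totient d) * dvd_reciprocal_sum q B d"
      using less.IH by simp
  qed
  moreover have "totient k > 0" using less.prems by simp
  ultimately show ?case
    using assms(1) less.prems gcd_ratio_sum_eq_sum_totient[OF less.prems, of p A]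
      gcd_ratio_sum_eq_sum_totient[OF less.prems, of q B] split by simp
qed

lemma dvd_reciprocal_sum_remove_value:
  assumes "finite A"
  shows "dvd_reciprocal_sum p A d = dvd_reciprocal_sum p {x\<in>A. p x \<noteq> m} d
    + real (card {x\<in>A. p x = m}) * (if d dvd m then 1 / real m else 0)"
proof -
  have "dvd_reciprocal_sum p A d
      = dvd_reciprocal_sum p {x\<in>A. p x \<noteq> m} d + dvd_reciprocal_sum p {x\<in>A. p x = m} d"
    unfolding dvd_reciprocal_sum_def using assms
    by (subst sum.union_disjoint[symmetric]) (auto intro: sum.cong)
  moreover have "dvd_reciprocal_sum p {x\<in>A. p x = m} d
      = real (card {x\<in>A. p x = m}) * (if d dvd m then 1 / real m else 0)"
    unfolding dvd_reciprocal_sum_def by (subst sum.cong[OF refl, where h = "\<lambda>_. if d dvd m then 1 / real m else 0"]) auto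
  ultimately show ?thesis by simp
qed

lemma dvd_reciprocal_sum_at_max:
  assumes "finite A" "\<forall>x\<in>A. 0 < p x \<and> p x \<le> m"
  shows "dvd_reciprocal_sum p A m = real (card {x\<in>A. p x = m}) / real m"
proof -
  have "dvd_reciprocal_sum p A m = (\<Sum>x\<in>A. if p x = m then 1 / real m else 0)"
    unfolding dvd_reciprocal_sum_def
  proof (rule sum.cong[OF refl])
    fix x assume "x \<in> A"
    then have "0 < p x" "p x \<le> m" using assms(2) by auto
    then have "m dvd p x \<longleftrightarrow> p x = m" using dvd_imp_le[of m "p x"] by auto
    then show "(if m dvd p x then 1 / real (p x) else 0) = (if p x = m then 1 / real m else 0)" by auto
  qed
  then show ?thesis using assms(1) by (simp add: sum.inter_filter[symmetric])
qed

text \<open>At the largest value m, the reciprocal sum for d = m sees exactly the elements of value m;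
  remove them and induct.\<close>

lemma value_counts_eq_if_dvd_reciprocal_sums_eq:
  fixes p q :: "'a \<Rightarrow> nat"
  assumes "finite A" "finite B" "\<forall>x\<in>A. p x > 0" "\<forall>y\<in>B. q y > 0"
    and "\<forall>d>0. dvd_reciprocal_sum p A d = dvd_reciprocal_sum q B d"
  shows "card {x\<in>A. p x = j} = card {y\<in>B. q y = j}"
  using assms
proof (induction "card A + card B" arbitrary: A B rule: less_induct)
  case less
  show ?case
  proof (cases "A = {} \<and> B = {}")
    case True then show ?thesis by simp
  next
    case False
    define m where "m = Max (p ` A \<union> q ` B)"
    have finite_values: "finite (p ` A \<union> q ` B)" using less.prems(1,2) by simp
    have "m \<in> p ` A \<union> q ` B" unfolding m_def using finite_values False by (intro Max_in) auto
    then have "m > 0" using less.prems(3,4) by auto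
    have "p x \<le> m" if "x \<in> A" for x unfolding m_def using finite_values that by (intro Max_ge) auto
    moreover have "q y \<le> m" if "y \<in> B" for y unfolding m_def using finite_values that by (intro Max_ge) auto
    ultimately have bounds: "\<forall>x\<in>A. 0 < p x \<and> p x \<le> m" "\<forall>y\<in>B. 0 < q y \<and> q y \<le> m"
      using less.prems(3,4) by auto
    have "real (card {x\<in>A. p x = m}) / real m = real (card {y\<in>B. q y = m}) / real m"
      using dvd_reciprocal_sum_at_max[OF less.prems(1) bounds(1)]
        dvd_reciprocal_sum_at_max[OF less.prems(2) bounds(2)] less.prems(5) \<open>m > 0\<close> by simp
    then have count_m: "card {x\<in>A. p x = m} = card {y\<in>B. q y = m}"
      using \<open>m > 0\<close> by simp
    define A' where "A' = {x\<in>A. p x \<noteq> m}"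
    define B' where "B' = {y\<in>B. q y \<noteq> m}"
    have "{x\<in>A. p x = m} \<noteq> {} \<or> {y\<in>B. q y = m} \<noteq> {}"
      using \<open>m \<in> p ` A \<union> q ` B\<close> by auto
    moreover have "finite {x\<in>A. p x = m}" "finite {y\<in>B. q y = m}" using less.prems(1,2) by simp_all
    ultimately have "{x\<in>A. p x = m} \<noteq> {}" "{y\<in>B. q y = m} \<noteq> {}"
      using count_m by (metis card_0_eq)+
    then have "A' \<subset> A" "B' \<subset> B" unfolding A'_def B'_def by auto
    then have "card A' < card A" "card B' < card B"
      using less.prems(1,2) by (simp_all add: psubset_card_mono)
    then have "card A' + card B' < card A + card B" by simp
    moreover have "finite A'" "finite B'" "\<forall>x\<in>A'. p x > 0" "\<forall>y\<in>B'. q y > 0"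
      using less.prems(1-4) unfolding A'_def B'_def by auto
    moreover have "\<forall>d>0. dvd_reciprocal_sum p A' d = dvd_reciprocal_sum q B' d"
      using less.prems(5) count_m dvd_reciprocal_sum_remove_value[OF less.prems(1), of p _ m]
        dvd_reciprocal_sum_remove_value[OF less.prems(2), of q _ m]
      unfolding A'_def B'_def by simp
    ultimately have IH: "card {x\<in>A'. p x = j} = card {y\<in>B'. q y = j}"
      by (rule less.hyps)
    show ?thesis
    proof (cases "j = m")
      case True
      then show ?thesis using count_m by simp
    next
      case False
      then have "{x\<in>A'. p x = j} = {x\<in>A. p x = j}" "{y\<in>B'. q y = j} = {y\<in>B. q y = j}"
        unfolding A'_def B'_def by auto
      then show ?thesis using IH by simp
    qed
  qed
qed

lemma value_counts_eq_if_gcd_ratio_sums_eq: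
  fixes p q :: "'a \<Rightarrow> nat"
  assumes "finite A" "finite B" "c > 0"
    and "\<forall>x\<in>A. p x > 0 \<and> c dvd p x" "\<forall>y\<in>B. q y > 0 \<and> c dvd q y"
    and "\<forall>k>0. gcd_ratio_sum p A (c * k) = gcd_ratio_sum q B (c * k)"
  shows "card {x\<in>A. p x = j} = card {y\<in>B. q y = j}"
proof -
  let ?p = "\<lambda>x. p x div c" and ?q = "\<lambda>y. q y div c"
  have "gcd_ratio_sum ?p A k = gcd_ratio_sum ?q B k" if "k > 0" for k
  proof -
    have "gcd_ratio_sum ?p A k = gcd_ratio_sum p A (c * k)"
      using assms(4) by (intro gcd_ratio_sum_mult[symmetric]) blast
    also have "\<dots> = gcd_ratio_sum q B (c * k)" using assms(6) that by blast
    also have "\<dots> = gcd_ratio_sum ?q B k"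
      using assms(5) by (intro gcd_ratio_sum_mult) blast
    finally show ?thesis .
  qed
  then have "\<forall>d>0. dvd_reciprocal_sum ?p A d = dvd_reciprocal_sum ?q B d"
    using dvd_reciprocal_sums_eq_if_gcd_ratio_sums_eq[of ?p A ?q B] by blast
  moreover have "\<forall>x\<in>A. ?p x > 0" "\<forall>y\<in>B. ?q y > 0"
    using assms(3-5) by (simp_all add: div_greater_zero_iff dvd_imp_le)
  ultimately have counts: "card {x\<in>A. ?p x = i} = card {y\<in>B. ?q y = i}" for i
    using value_counts_eq_if_dvd_reciprocal_sums_eq[OF assms(1,2), of ?p ?q] by blast
  show ?thesis
  proof (cases "c dvd j")
    case True
    have "a = j \<longleftrightarrow> a div c = j div c" if "c dvd a" for a
      using that True assms(3) by (auto elim!: dvdE)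
    then have "{x\<in>A. p x = j} = {x\<in>A. ?p x = j div c}" "{y\<in>B. q y = j} = {y\<in>B. ?q y = j div c}"
      using assms(4,5) by auto
    then show ?thesis using counts by simp
  next
    case False
    then have "{x\<in>A. p x = j} = {}" "{y\<in>B. q y = j} = {}" using assms(4,5) by auto
    then show ?thesis by (simp only: card.empty)
  qed
qed

section \<open>Cycle type from the numbers of odd invariant subsets\<close>

lemma card_odd_invariant_subsets_if_nonempty:
  assumes "\<sigma> permutes A" "finite A" "odd_invariant_subsets \<sigma> A \<noteq> {}"
  shows "2 * card (odd_invariant_subsets \<sigma> A) = 2 ^ card (orbits \<sigma> A)"
proof -
  obtain x where "x \<in> A" "odd (least_power \<sigma> x)"
    using assms(3) odd_invariant_subsets_nonempty_iff[OF assms(1,2)] by blast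
  then show ?thesis by (rule card_odd_invariant_subsets_if_odd_cycle[OF assms(1,2)])
qed

lemma odd_invariant_subsets_funpow_nonempty_iff:
  assumes "\<sigma> permutes A" "finite A"
  shows "odd_invariant_subsets (\<sigma> ^^ k) A \<noteq> {}
    \<longleftrightarrow> (\<exists>x\<in>A. odd (least_power \<sigma> x div gcd (least_power \<sigma> x) k))"
proof -
  have "permutation \<sigma>" using assms permutation_permutes by blast
  then show ?thesis
    unfolding odd_invariant_subsets_nonempty_iff[OF permutes_funpow[OF assms(1)] assms(2)]
    by (simp add: least_power_funpow)
qed

lemma odd_div_gcd_two_power_multiplicity:
  fixes m :: nat
  assumes "m > 0"
  shows "odd (m div gcd m (2 ^ multiplicity 2 m))"
proof -
  have "gcd m (2 ^ multiplicity 2 m) = 2 ^ multiplicity 2 m"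
    using multiplicity_dvd[of 2 m] by (simp add: gcd_nat.absorb2)
  then show ?thesis using multiplicity_decompose[of m 2] assms by simp
qed

lemma two_power_dvd_least_power_if_no_odd_invariant_subsets:
  assumes "\<sigma> permutes A" "finite A" "\<forall>i<a. odd_invariant_subsets (\<sigma> ^^ (2 ^ i)) A = {}" "x \<in> A"
  shows "2 ^ a dvd least_power \<sigma> x"
proof (rule ccontr)
  let ?v = "multiplicity 2 (least_power \<sigma> x)"
  assume "\<not> 2 ^ a dvd least_power \<sigma> x"
  then have "\<not> a \<le> ?v" using multiplicity_dvd'[of a 2 "least_power \<sigma> x"] by blast
  then have "?v < a" by simp
  have "permutation \<sigma>" using assms(1,2) permutation_permutes by blast
  then have "least_power \<sigma> x > 0" by (rule least_power_of_permutation(2))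
  then have "odd (least_power \<sigma> x div gcd (least_power \<sigma> x) (2 ^ ?v))"
    by (rule odd_div_gcd_two_power_multiplicity)
  then have "odd_invariant_subsets (\<sigma> ^^ (2 ^ ?v)) A \<noteq> {}"
    using odd_invariant_subsets_funpow_nonempty_iff[OF assms(1,2)] assms(4) by blast
  then show False using assms(3) \<open>?v < a\<close> by blast
qed

lemma odd_div_gcd_if_odd:
  fixes w k :: nat
  assumes "odd w"
  shows "odd (w div gcd w k)"
proof -
  have "w = (w div gcd w k) * gcd w k" by simp
  then have "w div gcd w k dvd w" by (metis dvd_triv_left)
  then show ?thesis using assms dvd_trans by blast
qed

text \<open>2^a is the largest power of two dividing all cycle lengths, characterised as the least i
  for which s^(2^i) has an odd cycle.\<close>

lemma common_two_power_dvd_cycle_lengths: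
  assumes "s permutes A" "t permutes A" "finite A" "A \<noteq> {}"
    and "\<forall>k. odd_invariant_subsets (s ^^ k) A = {} \<longleftrightarrow> odd_invariant_subsets (t ^^ k) A = {}"
  obtains a where "\<forall>x\<in>A. 2 ^ a dvd least_power s x" "\<forall>x\<in>A. 2 ^ a dvd least_power t x"
    "\<forall>k. odd_invariant_subsets (s ^^ (2 ^ a * k)) A \<noteq> {}"
proof -
  let ?has_odd = "\<lambda>i. odd_invariant_subsets (s ^^ (2 ^ i)) A \<noteq> {}"
  have "permutation s" using assms(1,3) permutation_permutes by blast
  obtain x0 where "x0 \<in> A" using assms(4) by blast
  moreover have "odd (least_power s x0 div gcd (least_power s x0) (2 ^ multiplicity 2 (least_power s x0)))"
    by (rule odd_div_gcd_two_power_multiplicity[OF least_power_of_permutation(2)[OF \<open>permutation s\<close>]])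
  ultimately have "\<exists>i. ?has_odd i"
    using odd_invariant_subsets_funpow_nonempty_iff[OF assms(1,3)] by blast
  define a where "a = (LEAST i. ?has_odd i)"
  have "?has_odd a" unfolding a_def using LeastI_ex[OF \<open>\<exists>i. ?has_odd i\<close>] .
  have below: "\<forall>i<a. \<not> ?has_odd i" unfolding a_def using not_less_Least by blast
  have dvd_s: "\<forall>x\<in>A. 2 ^ a dvd least_power s x"
    using two_power_dvd_least_power_if_no_odd_invariant_subsets[OF assms(1,3)] below by blast
  moreover have "\<forall>x\<in>A. 2 ^ a dvd least_power t x"
    using two_power_dvd_least_power_if_no_odd_invariant_subsets[OF assms(2,3)] below assms(5) by blast
  moreover have "odd_invariant_subsets (s ^^ (2 ^ a * k)) A \<noteq> {}" for k
  proof -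
    obtain x where x: "x \<in> A" "odd (least_power s x div gcd (least_power s x) (2 ^ a))"
      using \<open>?has_odd a\<close> odd_invariant_subsets_funpow_nonempty_iff[OF assms(1,3)] by blast
    obtain w where w: "least_power s x = 2 ^ a * w" using dvd_s x(1) by blast
    then have "odd w" using x(2) by simp
    moreover have "least_power s x div gcd (least_power s x) (2 ^ a * k) = w div gcd w k"
      unfolding w by (simp add: gcd_mult_distrib_nat[symmetric])
    ultimately have "odd (least_power s x div gcd (least_power s x) (2 ^ a * k))"
      using odd_div_gcd_if_odd by simp
    then show ?thesis using odd_invariant_subsets_funpow_nonempty_iff[OF assms(1,3)] x(1) by blast
  qed
  ultimately show ?thesis using that by blast
qed

lemma cycle_counts_eq_if_odd_invariant_counts_eq:
  assumes "finite A" "s permutes A" "t permutes A"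
    and "\<forall>k. card (odd_invariant_subsets (s ^^ k) A) = card (odd_invariant_subsets (t ^^ k) A)"
  shows "card {x\<in>A. least_power s x = j} = card {x\<in>A. least_power t x = j}"
proof (cases "A = {}")
  case True
  then show ?thesis by simp
next
  case False
  have finite_odd: "finite (odd_invariant_subsets \<sigma> A)" for \<sigma>
    using assms(1) unfolding odd_invariant_subsets_def invariant_subsets_def by simp
  have empty_iff: "\<forall>k. odd_invariant_subsets (s ^^ k) A = {} \<longleftrightarrow> odd_invariant_subsets (t ^^ k) A = {}"
  proof
    fix k
    have "odd_invariant_subsets (s ^^ k) A = {} \<longleftrightarrow> card (odd_invariant_subsets (s ^^ k) A) = 0"
      using finite_odd by simp
    also have "\<dots> \<longleftrightarrow> card (odd_invariant_subsets (t ^^ k) A) = 0" using assms(4) by simp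
    also have "\<dots> \<longleftrightarrow> odd_invariant_subsets (t ^^ k) A = {}" using finite_odd by simp
    finally show "odd_invariant_subsets (s ^^ k) A = {} \<longleftrightarrow> odd_invariant_subsets (t ^^ k) A = {}" .
  qed
  obtain a where a: "\<forall>x\<in>A. 2 ^ a dvd least_power s x" "\<forall>x\<in>A. 2 ^ a dvd least_power t x"
    "\<forall>k. odd_invariant_subsets (s ^^ (2 ^ a * k)) A \<noteq> {}"
    by (rule common_two_power_dvd_cycle_lengths[OF assms(2,3,1) False empty_iff])
  have same_gcd_sums:
    "gcd_ratio_sum (least_power s) A (2 ^ a * k) = gcd_ratio_sum (least_power t) A (2 ^ a * k)" for k
  proof -
    let ?k = "2 ^ a * k"
    have "2 * card (odd_invariant_subsets (s ^^ ?k) A) = 2 ^ card (orbits (s ^^ ?k) A)"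
      by (rule card_odd_invariant_subsets_if_nonempty[OF permutes_funpow[OF assms(2)] assms(1) a(3)[rule_format]])
    moreover have "odd_invariant_subsets (t ^^ ?k) A \<noteq> {}" using a(3) empty_iff by simp
    then have "2 * card (odd_invariant_subsets (t ^^ ?k) A) = 2 ^ card (orbits (t ^^ ?k) A)"
      by (rule card_odd_invariant_subsets_if_nonempty[OF permutes_funpow[OF assms(3)] assms(1)])
    ultimately have "(2::nat) ^ card (orbits (s ^^ ?k) A) = 2 ^ card (orbits (t ^^ ?k) A)"
      using assms(4) by simp
    then have "card (orbits (s ^^ ?k) A) = card (orbits (t ^^ ?k) A)" by simp
    then show ?thesis
      using card_orbits_funpow_eq_gcd_ratio_sum[OF assms(2,1), of ?k]
        card_orbits_funpow_eq_gcd_ratio_sum[OF assms(3,1), of ?k] by simp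
  qed
  have "permutation s" "permutation t" using assms(1-3) permutation_permutes by blast+
  then have "least_power s x > 0" "least_power t x > 0" for x
    by (simp_all add: least_power_of_permutation(2))
  with a(1,2) same_gcd_sums show ?thesis
    by (intro value_counts_eq_if_gcd_ratio_sums_eq[OF assms(1,1), where c = "2 ^ a"]) auto
qed

section \<open>Permutations with the same cycle type are conjugate\<close>

lemma funpow_perm_restrict:
  assumes "\<forall>z\<in>B. \<sigma> z \<in> B" "z \<in> B"
  shows "(perm_restrict \<sigma> B ^^ i) z = (\<sigma> ^^ i) z"
proof -
  have "(\<sigma> ^^ i) z \<in> B" for i by (induction i) (use assms in auto)
  then show ?thesis by (induction i) (simp_all add: perm_restrict_simps)
qed

lemma least_power_perm_restrict:
  assumes "\<forall>z\<in>B. \<sigma> z \<in> B" "z \<in> B"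
  shows "least_power (perm_restrict \<sigma> B) z = least_power \<sigma> z"
  unfolding least_power_def funpow_perm_restrict[OF assms] ..

lemma orbit_complement_closed:
  assumes "\<sigma> permutes A" "finite A" "z \<in> A - orbit \<sigma> x"
  shows "\<sigma> z \<in> A - orbit \<sigma> x"
proof -
  have "cyclic_on \<sigma> (orbit \<sigma> x)" by (rule cyclic_on_orbit[OF assms(1,2)])
  then have "\<sigma> z \<notin> orbit \<sigma> x" using cyclic_on_f_in[OF assms(1)] assms(3) by blast
  then show ?thesis using permutes_in_image[OF assms(1)] assms(3) by simp
qed

lemma cycle_counts_remove_orbit:
  assumes "\<sigma> permutes A" "finite A" "x \<in> A"
  shows "card {z\<in>A - orbit \<sigma> x. least_power (perm_restrict \<sigma> (A - orbit \<sigma> x)) z = j}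
    = card {z\<in>A. least_power \<sigma> z = j} - (if j = least_power \<sigma> x then least_power \<sigma> x else 0)"
proof -
  have p: "permutation \<sigma>" using assms(1,2) permutation_permutes by blast
  have closed: "\<forall>z\<in>A - orbit \<sigma> x. \<sigma> z \<in> A - orbit \<sigma> x"
    using orbit_complement_closed[OF assms(1,2)] by blast
  have restricted: "{z\<in>A - orbit \<sigma> x. least_power (perm_restrict \<sigma> (A - orbit \<sigma> x)) z = j}
      = {z\<in>A. least_power \<sigma> z = j} - orbit \<sigma> x"
    using least_power_perm_restrict[OF closed] by auto
  have lp_orbit: "least_power \<sigma> z = least_power \<sigma> x" if "z \<in> orbit \<sigma> x" for z
    using least_power_eq_if_mem_orbit[OF p that] .
  have "card ({z\<in>A. least_power \<sigma> z = j} - orbit \<sigma> x)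
      = card {z\<in>A. least_power \<sigma> z = j} - (if j = least_power \<sigma> x then least_power \<sigma> x else 0)"
  proof (cases "j = least_power \<sigma> x")
    case True
    then have "orbit \<sigma> x \<subseteq> {z\<in>A. least_power \<sigma> z = j}"
      using lp_orbit permutes_orbit_subset[OF assms(1,3)] by blast
    then show ?thesis
      using True card_orbit_eq_least_power[OF p] finite_orbit[OF permutation_self_in_orbit[OF p]]
      by (simp add: card_Diff_subset)
  next
    case False
    then have "{z\<in>A. least_power \<sigma> z = j} - orbit \<sigma> x = {z\<in>A. least_power \<sigma> z = j}"
      using lp_orbit by blast
    then show ?thesis using False by simp
  qed
  then show ?thesis unfolding restricted .
qed

lemma intertwining_bij_betw_orbits:
  assumes "permutation s" "permutation t" "least_power s x = least_power t y"
  obtains f where "bij_betw f (orbit s x) (orbit t y)" "\<forall>z\<in>orbit s x. f (s z) = t (f z)"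
proof -
  have same_orbit_position: "(s ^^ i) x = (s ^^ j) x \<longleftrightarrow> (t ^^ i) y = (t ^^ j) y" for i j
    unfolding funpow_eq_iff_mod_least_power[OF assms(1)] funpow_eq_iff_mod_least_power[OF assms(2)] assms(3) ..
  define f where "f z = (t ^^ (LEAST i. (s ^^ i) x = z)) y" for z
  have f_funpow: "f ((s ^^ i) x) = (t ^^ i) y" for i
  proof -
    have "(s ^^ (LEAST j. (s ^^ j) x = (s ^^ i) x)) x = (s ^^ i) x" by (rule LeastI[of _ i]) simp
    then show ?thesis unfolding f_def same_orbit_position .
  qed
  have "bij_betw f (orbit s x) (orbit t y)"
  proof (rule bij_betw_imageI)
    show "inj_on f (orbit s x)"
    proof (rule inj_onI)
      fix z z' assume "z \<in> orbit s x" "z' \<in> orbit s x" "f z = f z'"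
      then obtain i i' where "z = (s ^^ i) x" "z' = (s ^^ i') x" "(t ^^ i) y = (t ^^ i') y"
        using f_funpow unfolding orbit_eq_range_funpow[OF assms(1)] by auto
      then show "z = z'" using same_orbit_position by simp
    qed
    show "f ` orbit s x = orbit t y"
      unfolding orbit_eq_range_funpow[OF assms(1)] orbit_eq_range_funpow[OF assms(2)] image_image f_funpow ..
  qed
  moreover have "f (s z) = t (f z)" if z_in: "z \<in> orbit s x" for z
  proof -
    obtain i where z: "z = (s ^^ i) x" using z_in unfolding orbit_eq_range_funpow[OF assms(1)] by auto
    then have "f (s z) = f ((s ^^ Suc i) x)" by simp
    also have "\<dots> = (t ^^ Suc i) y" by (rule f_funpow)
    also have "\<dots> = t (f z)" using z f_funpow by simp
    finally show ?thesis .
  qed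
  ultimately show ?thesis using that by blast
qed

lemma intertwining_bij_union_orbit:
  assumes "s permutes A" "t permutes B" "finite A" "x \<in> A" "y \<in> B"
    and "bij_betw g (orbit s x) (orbit t y)" "\<forall>z\<in>orbit s x. g (s z) = t (g z)"
    and "bij_betw h (A - orbit s x) (B - orbit t y)" "\<forall>z\<in>A - orbit s x. h (s z) = t (h z)"
  obtains f where "bij_betw f A B" "\<forall>z\<in>A. f (s z) = t (f z)"
proof -
  define f where "f z = (if z \<in> orbit s x then g z else h z)" for z
  have "bij_betw f (orbit s x) (orbit t y)"
    using assms(6) by (rule bij_betw_cong[THEN iffD1, rotated]) (simp add: f_def)
  moreover have "bij_betw f (A - orbit s x) (B - orbit t y)"
    using assms(8) by (rule bij_betw_cong[THEN iffD1, rotated]) (simp add: f_def)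
  ultimately have "bij_betw f (orbit s x \<union> (A - orbit s x)) (orbit t y \<union> (B - orbit t y))"
    by (rule bij_betw_combine) blast
  moreover have "orbit s x \<union> (A - orbit s x) = A" using permutes_orbit_subset[OF assms(1,4)] by blast
  moreover have "orbit t y \<union> (B - orbit t y) = B" using permutes_orbit_subset[OF assms(2,5)] by blast
  moreover have "f (s z) = t (f z)" if "z \<in> A" for z
  proof (cases "z \<in> orbit s x")
    case True
    then have "s z \<in> orbit s x" by (rule orbit.step)
    then show ?thesis using True assms(7) by (simp add: f_def)
  next
    case False
    then have "s z \<notin> orbit s x"
      using cyclic_on_f_in[OF assms(1) cyclic_on_orbit[OF assms(1,3)]] by blast
    then show ?thesis using False that assms(9) by (simp add: f_def)
  qed
  ultimately show ?thesis using that by auto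
qed

lemma intertwining_bij_if_cycle_counts_eq:
  assumes "finite A" "finite B" "s permutes A" "t permutes B"
    and "\<forall>j. card {x\<in>A. least_power s x = j} = card {y\<in>B. least_power t y = j}"
  shows "\<exists>f. bij_betw f A B \<and> (\<forall>x\<in>A. f (s x) = t (f x))"
  using assms
proof (induction "card A" arbitrary: A B s t rule: less_induct)
  case less
  have ps: "permutation s" using less.prems(1,3) permutation_permutes by blast
  have pt: "permutation t" using less.prems(2,4) permutation_permutes by blast
  show ?case
  proof (cases "A = {}")
    case True
    have "B = {}"
    proof (rule ccontr)
      assume "B \<noteq> {}"
      then obtain y where "y \<in> B" by blast
      then have "card {y'\<in>B. least_power t y' = least_power t y} \<noteq> 0"
        using less.prems(2) by (auto simp: card_eq_0_iff)
      then show False using less.prems(5) True by simp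
    qed
    then show ?thesis using True by (simp add: bij_betw_def)
  next
    case False
    then obtain x where x: "x \<in> A" by blast
    then have "card {x'\<in>A. least_power s x' = least_power s x} \<noteq> 0"
      using less.prems(1) by (auto simp: card_eq_0_iff)
    then have "card {y\<in>B. least_power t y = least_power s x} \<noteq> 0" using less.prems(5) by simp
    then obtain y where y: "y \<in> B" "least_power s x = least_power t y" by (auto simp: card_eq_0_iff)
    obtain g where g: "bij_betw g (orbit s x) (orbit t y)" "\<forall>z\<in>orbit s x. g (s z) = t (g z)"
      using intertwining_bij_betw_orbits[OF ps pt y(2)] by blast
    let ?A = "A - orbit s x" and ?B = "B - orbit t y"
    let ?s = "perm_restrict s ?A" and ?t = "perm_restrict t ?B"
    have "?s permutes ?A" by (rule perm_restrict_diff_cyclic[OF less.prems(3) cyclic_on_orbit'[OF ps]])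
    moreover have "?t permutes ?B" by (rule perm_restrict_diff_cyclic[OF less.prems(4) cyclic_on_orbit'[OF pt]])
    moreover have "\<forall>j. card {z\<in>?A. least_power ?s z = j} = card {z\<in>?B. least_power ?t z = j}"
      using cycle_counts_remove_orbit[OF less.prems(3,1) x] cycle_counts_remove_orbit[OF less.prems(4,2) y(1)]
        less.prems(5) y(2) by simp
    moreover have "card ?A < card A"
      using x permutation_self_in_orbit[OF ps] less.prems(1) by (intro psubset_card_mono) auto
    ultimately obtain h where h: "bij_betw h ?A ?B" "\<forall>z\<in>?A. h (?s z) = ?t (h z)"
      using less.hyps[of ?A ?B ?s ?t] less.prems(1,2) by auto
    have "\<forall>z\<in>?A. h (s z) = t (h z)"
      using h bij_betwE[OF h(1)] by (simp add: perm_restrict_simps)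
    then obtain f where "bij_betw f A B" "\<forall>z\<in>A. f (s z) = t (f z)"
      by (rule intertwining_bij_union_orbit[OF less.prems(3,4,1) x y(1) g h(1)])
    then show ?thesis by blast
  qed
qed

lemma conjugate_if_intertwining_bij:
  assumes "s permutes A" "t permutes A" "bij_betw f A A" "\<forall>x\<in>A. f (s x) = t (f x)"
  shows "\<exists>p. p permutes A \<and> t = p \<circ> s \<circ> Hilbert_Choice.inv p"
proof -
  define p where "p z = (if z \<in> A then f z else z)" for z
  have "bij_betw p A A" using assms(3) by (rule bij_betw_cong[THEN iffD1, rotated]) (simp add: p_def)
  then have p: "p permutes A" by (rule bij_imp_permutes) (simp add: p_def)
  have "t (p z) = p (s z)" for z
    using assms(4) permutes_not_in[OF assms(1)] permutes_not_in[OF assms(2)] permutes_in_image[OF assms(1)]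
    by (cases "z \<in> A") (simp_all add: p_def)
  then have "t \<circ> p = p \<circ> s" by auto
  then have "t = p \<circ> s \<circ> Hilbert_Choice.inv p"
    using permutes_inverses(1)[OF p] by (metis comp_assoc comp_id fun.map_id permutes_inv_o(1)[OF p])
  then show ?thesis using p by blast
qed

section \<open>The permutation representation on odd subsets\<close>

lemma finite_odd_subsets: "finite (odd_subsets n)"
  by (rule finite_subset[of _ "Pow {1..n}"]) (auto simp: odd_subsets_def)

lemma odd_subsets_enum:
  "distinct (odd_subsets_enum n)" "set (odd_subsets_enum n) = odd_subsets n"
proof -
  have "\<exists>xs. distinct xs \<and> set xs = odd_subsets n"
    using finite_distinct_list[OF finite_odd_subsets] by blast
  then have "distinct (odd_subsets_enum n) \<and> set (odd_subsets_enum n) = odd_subsets n"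
    unfolding odd_subsets_enum_def by (rule someI_ex)
  then show "distinct (odd_subsets_enum n)" "set (odd_subsets_enum n) = odd_subsets n" by auto
qed

lemma image_in_odd_subsets:
  assumes "\<sigma> permutes {1..n}" "S \<in> odd_subsets n"
  shows "\<sigma> ` S \<in> odd_subsets n"
proof -
  have "card (\<sigma> ` S) = card S" using permutes_inj[OF assms(1)] by (simp add: card_image inj_on_subset)
  moreover have "\<sigma> ` S \<subseteq> {1..n}"
    using assms permutes_in_image[OF assms(1)] unfolding odd_subsets_def by auto
  ultimately show ?thesis using assms(2) unfolding odd_subsets_def by auto
qed

abbreviation odd_rep_dim :: "nat \<Rightarrow> nat" where
  "odd_rep_dim n \<equiv> length (odd_subsets_enum n)"

lemma dim_odd_perm_rep [simp]:
  "dim_row (odd_perm_rep n \<sigma>) = odd_rep_dim n" "dim_col (odd_perm_rep n \<sigma>) = odd_rep_dim n"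
  unfolding odd_perm_rep_def Let_def by simp_all

lemma odd_perm_rep_index:
  "i < odd_rep_dim n \<Longrightarrow> j < odd_rep_dim n \<Longrightarrow> odd_perm_rep n \<sigma> $$ (i, j) =
     (if \<sigma> ` (odd_subsets_enum n ! j) = odd_subsets_enum n ! i then 1 else 0)"
  unfolding odd_perm_rep_def Let_def by simp

lemma odd_perm_rep_mult:
  assumes "\<sigma> permutes {1..n}" "\<tau> permutes {1..n}"
  shows "odd_perm_rep n \<sigma> * odd_perm_rep n \<tau> = odd_perm_rep n (\<sigma> \<circ> \<tau>)"
proof (rule eq_matI)
  let ?xs = "odd_subsets_enum n" and ?N = "odd_rep_dim n"
  fix i j assume "i < dim_row (odd_perm_rep n (\<sigma> \<circ> \<tau>))" "j < dim_col (odd_perm_rep n (\<sigma> \<circ> \<tau>))"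
  then have ij: "i < ?N" "j < ?N" by simp_all
  have "\<tau> ` (?xs ! j) \<in> set ?xs"
    using image_in_odd_subsets[OF assms(2)] odd_subsets_enum(2) ij(2) nth_mem by blast
  then obtain l where l: "l < ?N" "?xs ! l = \<tau> ` (?xs ! j)" by (metis in_set_conv_nth)
  have "(odd_perm_rep n \<sigma> * odd_perm_rep n \<tau>) $$ (i, j)
      = (\<Sum>k\<in>{0..<?N}. odd_perm_rep n \<sigma> $$ (i, k) * odd_perm_rep n \<tau> $$ (k, j))"
    using ij by (simp add: scalar_prod_def)
  also have "\<dots> = (\<Sum>k\<in>{0..<?N}. if k = l then odd_perm_rep n \<sigma> $$ (i, l) else 0)"
  proof (rule sum.cong[OF refl])
    fix k assume k: "k \<in> {0..<?N}"
    then have "\<tau> ` (?xs ! j) = ?xs ! k \<longleftrightarrow> k = l"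
      using l odd_subsets_enum(1) by (auto simp: nth_eq_iff_index_eq)
    then show "odd_perm_rep n \<sigma> $$ (i, k) * odd_perm_rep n \<tau> $$ (k, j)
        = (if k = l then odd_perm_rep n \<sigma> $$ (i, l) else 0)"
      using k ij odd_perm_rep_index by auto
  qed
  also have "\<dots> = odd_perm_rep n (\<sigma> \<circ> \<tau>) $$ (i, j)"
    using ij l odd_perm_rep_index by (simp add: image_comp)
  finally show "(odd_perm_rep n \<sigma> * odd_perm_rep n \<tau>) $$ (i, j) = odd_perm_rep n (\<sigma> \<circ> \<tau>) $$ (i, j)" .
qed simp_all

lemma odd_perm_rep_id: "odd_perm_rep n id = 1\<^sub>m (odd_rep_dim n)"
  by (rule eq_matI) (auto simp: odd_perm_rep_index odd_subsets_enum(1) nth_eq_iff_index_eq)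

lemma odd_perm_rep_funpow:
  assumes "\<sigma> permutes {1..n}"
  shows "odd_perm_rep n \<sigma> ^\<^sub>m k = odd_perm_rep n (\<sigma> ^^ k)"
proof (induction k)
  case 0
  then show ?case using odd_perm_rep_id by (simp add: id_def)
next
  case (Suc k)
  then have "odd_perm_rep n \<sigma> ^\<^sub>m Suc k = odd_perm_rep n ((\<sigma> ^^ k) \<circ> \<sigma>)"
    using odd_perm_rep_mult[OF permutes_funpow[OF assms] assms] by simp
  then show ?case by (simp only: funpow_Suc_right)
qed

definition mat_trace :: "'a::comm_ring_1 mat \<Rightarrow> 'a" where
  "mat_trace M = (\<Sum>i<dim_row M. M $$ (i, i))"

lemma mat_trace_mult_comm:
  fixes X Y :: "'a::comm_ring_1 mat"
  assumes "X \<in> carrier_mat m m" "Y \<in> carrier_mat m m"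
  shows "mat_trace (X * Y) = mat_trace (Y * X)"
proof -
  have "mat_trace (X * Y) = (\<Sum>i<m. \<Sum>k<m. X $$ (i, k) * Y $$ (k, i))"
    unfolding mat_trace_def using assms by (simp add: scalar_prod_def lessThan_atLeast0)
  also have "\<dots> = (\<Sum>k<m. \<Sum>i<m. Y $$ (k, i) * X $$ (i, k))"
    by (subst sum.swap) (simp add: mult.commute)
  also have "\<dots> = mat_trace (Y * X)"
    unfolding mat_trace_def using assms by (simp add: scalar_prod_def lessThan_atLeast0)
  finally show ?thesis .
qed

lemma mat_trace_similar:
  fixes A B :: "'a::comm_ring_1 mat"
  assumes "similar_mat A B"
  shows "mat_trace A = mat_trace B"
proof -
  obtain m P Q where PQ: "{A, B, P, Q} \<subseteq> carrier_mat m m" "Q * P = 1\<^sub>m m" "A = P * B * Q"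
    using similar_matD[OF assms] by blast
  then have carrier: "B \<in> carrier_mat m m" "P \<in> carrier_mat m m" "Q \<in> carrier_mat m m" by auto
  have "mat_trace A = mat_trace (P * (B * Q))" using PQ(3) carrier by (simp add: assoc_mult_mat)
  also have "\<dots> = mat_trace (B * Q * P)" using carrier by (intro mat_trace_mult_comm) auto
  also have "\<dots> = mat_trace B" using PQ(2) carrier by (simp add: assoc_mult_mat[of B m m Q m P m])
  finally show ?thesis .
qed

lemma mat_trace_odd_perm_rep:
  "mat_trace (odd_perm_rep n \<sigma>) = of_nat (card (odd_invariant_subsets \<sigma> {1..n}))"
proof -
  let ?xs = "odd_subsets_enum n"
  have "mat_trace (odd_perm_rep n \<sigma>) = (\<Sum>i<odd_rep_dim n. if \<sigma> ` (?xs ! i) = ?xs ! i then 1 else 0)"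
    unfolding mat_trace_def by (simp add: odd_perm_rep_index)
  also have "\<dots> = (\<Sum>S\<in>set ?xs. if \<sigma> ` S = S then 1 else 0)"
    by (subst sum.distinct_set_conv_list[OF odd_subsets_enum(1)])
      (simp add: sum_list_sum_nth atLeast0LessThan)
  also have "\<dots> = of_nat (card {S \<in> odd_subsets n. \<sigma> ` S = S})"
    by (simp add: odd_subsets_enum(2) sum.inter_filter[OF finite_odd_subsets, symmetric])
  also have "{S \<in> odd_subsets n. \<sigma> ` S = S} = odd_invariant_subsets \<sigma> {1..n}"
    unfolding odd_subsets_def odd_invariant_subsets_def invariant_subsets_def by auto
  finally show ?thesis .
qed

lemma odd_invariant_counts_eq_if_similar:
  assumes "s permutes {1..n}" "t permutes {1..n}" "similar_mat (odd_perm_rep n s) (odd_perm_rep n t)"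
  shows "card (odd_invariant_subsets (s ^^ k) {1..n}) = card (odd_invariant_subsets (t ^^ k) {1..n})"
proof -
  obtain P Q where "similar_mat_wit (odd_perm_rep n s) (odd_perm_rep n t) P Q"
    using assms(3) unfolding similar_mat_def by blast
  then have "similar_mat (odd_perm_rep n s ^\<^sub>m k) (odd_perm_rep n t ^\<^sub>m k)"
    unfolding similar_mat_def using similar_mat_wit_pow by blast
  then have "mat_trace (odd_perm_rep n (s ^^ k)) = mat_trace (odd_perm_rep n (t ^^ k))"
    unfolding odd_perm_rep_funpow[OF assms(1)] odd_perm_rep_funpow[OF assms(2)] by (rule mat_trace_similar)
  then show ?thesis unfolding mat_trace_odd_perm_rep by simp
qed

theorem theorem3p10:
  fixes n :: nat and s t :: "nat \<Rightarrow> nat"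
  assumes "n \<ge> 1"
    and "s permutes {1..n}" and "t permutes {1..n}"
    and "similar_mat (odd_perm_rep n s) (odd_perm_rep n t)"
  shows "\<exists>p. p permutes {1..n} \<and> t = p \<circ> s \<circ> Hilbert_Choice.inv p"
proof -
  have "card {x\<in>{1..n}. least_power s x = j} = card {x\<in>{1..n}. least_power t x = j}" for j
    using cycle_counts_eq_if_odd_invariant_counts_eq[OF _ assms(2,3)]
      odd_invariant_counts_eq_if_similar[OF assms(2-4)] by simp
  then obtain f where "bij_betw f {1..n} {1..n}" "\<forall>x\<in>{1..n}. f (s x) = t (f x)"
    using intertwining_bij_if_cycle_counts_eq[OF _ _ assms(2,3)] by blast
  then show ?thesis by (rule conjugate_if_intertwining_bij[OF assms(2,3)])
qed

end
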